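(* Let $v$ be a typical weight, let $X\subset\mathcal{H}(\mathbb{D})$ be a Banach space with bounded point evaluations $\delta_z$, and let $\beta>0$. Let $u\in\mathcal{H}(\mathbb{D})$, $\phi:\mathbb{D}\to\mathbb{D}$ holomorphic, $g\in\mathcal{H}(\mathbb{D})$, $W_{u,\phi}f=u\cdot(f\circ\phi)$ and $T_gf(z)=\int_0^zf(w)g'(w)\,dw$. Then: (i) $W_{u,\phi}:X\to H_{v,0}$ is bounded if and only if $v(z)u(z)\delta_{\phi(z)}\to0$ weak$^*$ in $X^*$ as $|z|\to1$. (ii) $T_g:X\to\mathcal{B}_{v,0}$ is bounded if and only if $v(z)g'(z)\delta_z\to0$ weak$^*$ in $X^*$ as $|z|\to1$. (iii) $T_g:X\to H_{\beta,0}$ is bounded if and only if $(1-|z|^2)^{\beta+1}g'(z)\delta_z\to0$ weak$^*$ in $X^*$ as $|z|\to1$.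
   Context: $\mathbb{D}$ is the unit disk, $\mathcal{H}(\mathbb{D})$ its holomorphic functions. $X$ has bounded point evaluations if for each $z\in\mathbb{D}$ there is $\delta_z\in X^*$ with $\delta_z(f)=f(z)$ for all $f\in X$. A typical weight is a continuous radial $v:\mathbb{D}\to(0,1]$, non-increasing in $|z|$, with $v(z)\to0$ as $|z|\to1$. $H_{v,0}=\{f\in\mathcal{H}(\mathbb{D}):\lim_{|z|\to1}v(z)|f(z)|=0\}$ with norm $\sup_z v(z)|f(z)|$; $\mathcal{B}_{v,0}=\{f:\lim_{|z|\to1}v(z)|f'(z)|=0\}$ with norm $|f(0)|+\sup_zv(z)|f'(z)|$; $H_{\beta,0}$ is $H_{v,0}$ for $v(z)=(1-|z|^2)^\beta$. *)

theory Defs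
  imports "HOL-Complex_Analysis.Complex_Analysis"
begin

abbreviation disc :: "complex set" where "disc \<equiv> ball 0 1"

definition to_bdry :: "complex filter" where
  "to_bdry = filtercomap norm (at_left (1::real))"

definition typical_weight :: "(complex \<Rightarrow> real) \<Rightarrow> bool" where
  "typical_weight v \<longleftrightarrow>
     continuous_on disc v \<and>
     (\<forall>z\<in>disc. 0 < v z \<and> v z \<le> 1) \<and>
     (\<forall>z\<in>disc. \<forall>w\<in>disc. norm z = norm w \<longrightarrow> v z = v w) \<and>
     (\<forall>z\<in>disc. \<forall>w\<in>disc. norm z \<le> norm w \<longrightarrow> v w \<le> v z) \<and>
     (v \<longlongrightarrow> 0) to_bdry"

text \<open>(X, N) is a Banach space of holomorphic functions on the disk (functions are
  identified when they agree on the disk) with bounded point evaluations.\<close>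
definition banach_bpe :: "(complex \<Rightarrow> complex) set \<Rightarrow> ((complex \<Rightarrow> complex) \<Rightarrow> real) \<Rightarrow> bool" where
  "banach_bpe X N \<longleftrightarrow>
     (\<forall>f\<in>X. f holomorphic_on disc) \<and>
     (\<lambda>z. 0) \<in> X \<and>
     (\<forall>f\<in>X. \<forall>g\<in>X. (\<lambda>z. f z + g z) \<in> X) \<and>
     (\<forall>f\<in>X. \<forall>c. (\<lambda>z. c * f z) \<in> X) \<and>
     (\<forall>f\<in>X. 0 \<le> N f) \<and>
     (\<forall>f\<in>X. N f = 0 \<longleftrightarrow> (\<forall>z\<in>disc. f z = 0)) \<and>
     (\<forall>f\<in>X. \<forall>g\<in>X. N (\<lambda>z. f z + g z) \<le> N f + N g) \<and>
     (\<forall>f\<in>X. \<forall>c. N (\<lambda>z. c * f z) = norm c * N f) \<and>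
     (\<forall>f\<in>X. \<forall>g\<in>X. (\<forall>z\<in>disc. f z = g z) \<longrightarrow> N f = N g) \<and>
     (\<forall>F. (\<forall>n. F n \<in> X) \<longrightarrow>
          (\<forall>e>0. \<exists>M. \<forall>m\<ge>M. \<forall>n\<ge>M. N (\<lambda>z. F m z - F n z) < e) \<longrightarrow>
          (\<exists>f\<in>X. (\<lambda>n. N (\<lambda>z. F n z - f z)) \<longlonglongrightarrow> 0)) \<and>
     (\<forall>z\<in>disc. \<exists>C. \<forall>f\<in>X. norm (f z) \<le> C * N f)"

definition Hv0 :: "(complex \<Rightarrow> real) \<Rightarrow> (complex \<Rightarrow> complex) set" where
  "Hv0 v = {f. f holomorphic_on disc \<and> ((\<lambda>z. v z * norm (f z)) \<longlongrightarrow> 0) to_bdry}"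

definition Hv_norm :: "(complex \<Rightarrow> real) \<Rightarrow> (complex \<Rightarrow> complex) \<Rightarrow> real" where
  "Hv_norm v f = (SUP z\<in>disc. v z * norm (f z))"

definition Bv0 :: "(complex \<Rightarrow> real) \<Rightarrow> (complex \<Rightarrow> complex) set" where
  "Bv0 v = {f. f holomorphic_on disc \<and> ((\<lambda>z. v z * norm (deriv f z)) \<longlongrightarrow> 0) to_bdry}"

definition Bv_norm :: "(complex \<Rightarrow> real) \<Rightarrow> (complex \<Rightarrow> complex) \<Rightarrow> real" where
  "Bv_norm v f = norm (f 0) + (SUP z\<in>disc. v z * norm (deriv f z))"

definition std_weight :: "real \<Rightarrow> complex \<Rightarrow> real" where
  "std_weight \<beta> z = (1 - (norm z)\<^sup>2) powr \<beta>"

definition bounded_into ::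
  "(complex \<Rightarrow> complex) set \<Rightarrow> ((complex \<Rightarrow> complex) \<Rightarrow> real) \<Rightarrow>
   ((complex \<Rightarrow> complex) \<Rightarrow> (complex \<Rightarrow> complex)) \<Rightarrow>
   (complex \<Rightarrow> complex) set \<Rightarrow> ((complex \<Rightarrow> complex) \<Rightarrow> real) \<Rightarrow> bool" where
  "bounded_into X N T S nS \<longleftrightarrow> (\<forall>f\<in>X. T f \<in> S) \<and> (\<exists>C. \<forall>f\<in>X. nS (T f) \<le> C * N f)"

definition Wop :: "(complex \<Rightarrow> complex) \<Rightarrow> (complex \<Rightarrow> complex) \<Rightarrow> (complex \<Rightarrow> complex) \<Rightarrow> complex \<Rightarrow> complex" where
  "Wop u \<phi> f = (\<lambda>z. u z * f (\<phi> z))"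

definition Top :: "(complex \<Rightarrow> complex) \<Rightarrow> (complex \<Rightarrow> complex) \<Rightarrow> complex \<Rightarrow> complex" where
  "Top g f = (\<lambda>z. contour_integral (linepath 0 z) (\<lambda>w. f w * deriv g w))"

end

theory Submission
  imports Defs
begin

text \<open>Necessity of each condition is immediate once the weighted quantity is rewritten in terms
  of the image function (for (iii) after passing to the derivative \<open>f g'\<close> by a Cauchy
  estimate on the disk of radius \<open>(1 - |z|) / 2\<close>). For sufficiency, a weak-star null family
  of functionals is pointwise bounded on \<open>X\<close>, so by the uniform boundedness principle
  (proved by a gliding hump argument from completeness of \<open>X\<close>) the weighted point
  evaluations are bounded by \<open>C * N f\<close>; this is the norm estimate in (i) and (ii).
  In (iii) the estimate and the little-o condition for \<open>T\<^sub>g f\<close> are recovered from those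
  of its derivative by integrating along radii.\<close>

section \<open>Limits at the boundary of the disk\<close>

lemma eventually_to_bdry_iff:
  "eventually P to_bdry \<longleftrightarrow> (\<exists>R. 0 \<le> R \<and> R < 1 \<and> (\<forall>z. R < norm z \<longrightarrow> norm z < 1 \<longrightarrow> P z))"
proof
  assume "eventually P to_bdry"
  then obtain Q where Q: "eventually Q (at_left (1::real))" and QP: "\<And>z. Q (norm z) \<Longrightarrow> P z"
    unfolding to_bdry_def eventually_filtercomap by blast
  obtain b where "b < 1" "\<And>y. b < y \<Longrightarrow> y < 1 \<Longrightarrow> Q y"
    using Q unfolding eventually_at_left_field by blast
  then show "\<exists>R. 0 \<le> R \<and> R < 1 \<and> (\<forall>z. R < norm z \<longrightarrow> norm z < 1 \<longrightarrow> P z)"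
    using QP by (intro exI[of _ "max b 0"]) auto
next
  assume "\<exists>R. 0 \<le> R \<and> R < 1 \<and> (\<forall>z. R < norm z \<longrightarrow> norm z < 1 \<longrightarrow> P z)"
  then obtain R where R: "R < 1" "\<And>z. R < norm z \<Longrightarrow> norm z < 1 \<Longrightarrow> P z" by blast
  have "eventually (\<lambda>t. R < t \<and> t < 1) (at_left (1::real))"
    using R(1) by (intro eventually_at_leftI[of R]) auto
  then show "eventually P to_bdry"
    unfolding to_bdry_def eventually_filtercomap using R(2) by blast
qed

lemma eventually_in_disc_to_bdry: "eventually (\<lambda>z. z \<in> disc) to_bdry"
  unfolding eventually_to_bdry_iff by (intro exI[of _ 0]) auto

lemma tendsto_zero_to_bdry_iff:
  fixes F :: "complex \<Rightarrow> 'a::real_normed_vector"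
  shows "(F \<longlongrightarrow> 0) to_bdry \<longleftrightarrow>
    (\<forall>e>0. \<exists>R. 0 \<le> R \<and> R < 1 \<and> (\<forall>z. R < norm z \<longrightarrow> norm z < 1 \<longrightarrow> norm (F z) \<le> e))"
proof -
  have "(F \<longlongrightarrow> 0) to_bdry \<longleftrightarrow> (\<forall>e>0. eventually (\<lambda>z. norm (F z) \<le> e) to_bdry)"
  proof
    assume "\<forall>e>0. eventually (\<lambda>z. norm (F z) \<le> e) to_bdry"
    then have "eventually (\<lambda>z. dist (F z) 0 < e) to_bdry" if "e > 0" for e
      using that by (auto elim!: allE[of _ "e / 2"] eventually_mono)
    then show "(F \<longlongrightarrow> 0) to_bdry" by (rule tendstoI)
  next
    assume "(F \<longlongrightarrow> 0) to_bdry"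
    then show "\<forall>e>0. eventually (\<lambda>z. norm (F z) \<le> e) to_bdry"
      by (auto dest!: tendstoD elim: eventually_mono)
  qed
  then show ?thesis unfolding eventually_to_bdry_iff .
qed

lemma weighted_tendsto_to_bdry_iff:
  fixes \<omega> :: "complex \<Rightarrow> real" and G :: "complex \<Rightarrow> complex"
  assumes "\<And>z. z \<in> disc \<Longrightarrow> 0 \<le> \<omega> z"
  shows "((\<lambda>z. \<omega> z * norm (G z)) \<longlongrightarrow> 0) to_bdry \<longleftrightarrow> ((\<lambda>z. of_real (\<omega> z) * G z) \<longlongrightarrow> 0) to_bdry"
proof -
  have "eventually (\<lambda>z. \<omega> z * norm (G z) = norm (of_real (\<omega> z) * G z)) to_bdry"
    using eventually_in_disc_to_bdry by eventually_elim (use assms in \<open>simp add: norm_mult\<close>)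
  then have "((\<lambda>z. \<omega> z * norm (G z)) \<longlongrightarrow> 0) to_bdry \<longleftrightarrow>
      ((\<lambda>z. norm (of_real (\<omega> z) * G z)) \<longlongrightarrow> 0) to_bdry"
    by (rule tendsto_cong)
  then show ?thesis by (simp add: tendsto_norm_zero_iff)
qed

lemma bounded_on_disc_if_tendsto_zero_to_bdry:
  fixes F :: "complex \<Rightarrow> 'a::real_normed_vector"
  assumes "continuous_on disc F" and "(F \<longlongrightarrow> 0) to_bdry"
  shows "\<exists>B. \<forall>z\<in>disc. norm (F z) \<le> B"
proof -
  obtain R where R: "R < 1" "\<And>z. R < norm z \<Longrightarrow> norm z < 1 \<Longrightarrow> norm (F z) \<le> 1"
    using assms(2) unfolding tendsto_zero_to_bdry_iff by (meson zero_less_one)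
  have "compact (F ` cball 0 R)"
    using R(1) by (intro compact_continuous_image continuous_on_subset[OF assms(1)]) auto
  then obtain B where B: "\<And>z. norm z \<le> R \<Longrightarrow> norm (F z) \<le> B"
    by (auto dest!: compact_imp_bounded simp: bounded_iff) (metis mem_cball_0)
  have "norm (F z) \<le> max B 1" if "z \<in> disc" for z
    using that B[of z] R(2)[of z] by (cases "norm z \<le> R") auto
  then show ?thesis by blast
qed

lemma contour_integral_linepath_primitive_disc:
  assumes "F holomorphic_on disc" and "z \<in> disc"
  shows "((\<lambda>z. contour_integral (linepath 0 z) F) has_field_derivative F z) (at z)"
proof (rule triangle_contour_integrals_starlike_primitive[where S = disc])
  show "continuous_on disc F" using assms(1) by (rule holomorphic_on_imp_continuous_on)
  show "closed_segment 0 y \<subseteq> disc" if "y \<in> disc" for y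
    using that by (intro closed_segment_subset) (auto simp: convex_ball)
  show "contour_integral (linepath 0 b) F + contour_integral (linepath b c) F
      + contour_integral (linepath c 0) F = 0"
    if "closed_segment b c \<subseteq> disc" for b c
  proof -
    have "convex hull {0, b, c} \<subseteq> disc"
      using that ends_in_segment by (intro hull_minimal) (auto simp: convex_ball)
    then have "(F has_contour_integral 0) (linepath 0 b +++ linepath b c +++ linepath c 0)"
      by (intro Cauchy_theorem_triangle holomorphic_on_subset[OF assms(1)])
    then show ?thesis by (rule has_chain_integral_chain_integral3)
  qed
qed (use assms in auto)

lemma Top_has_field_derivative:
  assumes "g holomorphic_on disc" "f holomorphic_on disc" "z \<in> disc"
  shows "(Top g f has_field_derivative f z * deriv g z) (at z)"
  unfolding Top_def using assms
  by (intro contour_integral_linepath_primitive_disc holomorphic_on_mult holomorphic_deriv) auto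

lemma Top_holomorphic: "g holomorphic_on disc \<Longrightarrow> f holomorphic_on disc \<Longrightarrow> Top g f holomorphic_on disc"
  using Top_has_field_derivative by (subst holomorphic_on_open) blast+

lemma deriv_Top: "g holomorphic_on disc \<Longrightarrow> f holomorphic_on disc \<Longrightarrow> z \<in> disc \<Longrightarrow>
    deriv (Top g f) z = f z * deriv g z"
  by (rule DERIV_imp_deriv[OF Top_has_field_derivative])

lemma Top_0: "Top g f 0 = 0"
  by (simp add: Top_def)

lemma typical_weight_continuous_nonneg:
  assumes "typical_weight v"
  shows "continuous_on disc v" and "\<And>z. z \<in> disc \<Longrightarrow> 0 \<le> v z"
  using assms unfolding typical_weight_def by (blast, fastforce)

lemma Hv_norm_le: "(\<And>z. z \<in> disc \<Longrightarrow> v z * norm (F z) \<le> K) \<Longrightarrow> Hv_norm v F \<le> K"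
  unfolding Hv_norm_def by (rule cSUP_least) auto

lemma Bv_norm_le:
  "(\<And>z. z \<in> disc \<Longrightarrow> v z * norm (deriv F z) \<le> K) \<Longrightarrow> Bv_norm v F \<le> norm (F 0) + K"
  unfolding Bv_norm_def by (simp, rule cSUP_least) auto

lemma tendsto_weighted_deriv_Top_iff:
  fixes v :: "complex \<Rightarrow> real"
  assumes v: "\<And>z. z \<in> disc \<Longrightarrow> 0 \<le> v z" and g: "g holomorphic_on disc" and f: "f holomorphic_on disc"
  shows "((\<lambda>z. v z * norm (deriv (Top g f) z)) \<longlongrightarrow> 0) to_bdry \<longleftrightarrow>
    ((\<lambda>z. of_real (v z) * deriv g z * f z) \<longlongrightarrow> 0) to_bdry"
proof -
  have "eventually (\<lambda>z. v z * norm (deriv (Top g f) z) = v z * norm (deriv g z * f z)) to_bdry"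
    using eventually_in_disc_to_bdry by eventually_elim (simp add: deriv_Top[OF g f] mult.commute)
  then have "((\<lambda>z. v z * norm (deriv (Top g f) z)) \<longlongrightarrow> 0) to_bdry \<longleftrightarrow>
      ((\<lambda>z. v z * norm (deriv g z * f z)) \<longlongrightarrow> 0) to_bdry"
    by (rule tendsto_cong)
  also have "\<dots> \<longleftrightarrow> ((\<lambda>z. of_real (v z) * (deriv g z * f z)) \<longlongrightarrow> 0) to_bdry"
    by (rule weighted_tendsto_to_bdry_iff[OF v])
  finally show ?thesis by (simp add: mult.assoc)
qed

section \<open>Standard weights: primitives and derivatives\<close>

lemma std_weight_nonneg: "0 \<le> std_weight \<beta> z"
  by (simp add: std_weight_def)

lemma one_minus_norm_le_one_minus_norm_sq:
  "z \<in> disc \<Longrightarrow> 0 < 1 - norm z \<and> 1 - norm z \<le> 1 - (norm z)\<^sup>2"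
  by (simp add: power2_eq_square mult_left_le_one_le)

lemma norm_le_of_std_weight_succ_le:
  assumes w: "w \<in> disc" and \<beta>: "0 \<le> \<beta>" and bound: "std_weight (\<beta> + 1) w * norm a \<le> K"
  shows "norm a \<le> K * (1 - norm w) powr (- \<beta> - 1)"
proof -
  have pos: "0 < (1 - norm w) powr (\<beta> + 1)"
    using one_minus_norm_le_one_minus_norm_sq[OF w] by simp
  have "(1 - norm w) powr (\<beta> + 1) \<le> std_weight (\<beta> + 1) w"
    unfolding std_weight_def using one_minus_norm_le_one_minus_norm_sq[OF w] \<beta>
    by (intro powr_mono2) auto
  then have "(1 - norm w) powr (\<beta> + 1) * norm a \<le> K"
    using bound by (meson mult_right_mono norm_ge_zero order_trans)
  then have "norm a \<le> K / (1 - norm w) powr (\<beta> + 1)"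
    using pos by (simp add: pos_le_divide_eq mult.commute)
  then show ?thesis using powr_minus[of "1 - norm w" "\<beta> + 1"] by (simp add: divide_inverse)
qed

text \<open>Mean value inequality along the radius through \<open>z\<close>, comparing \<open>t \<mapsto> H (t z)\<close> with
  \<open>t \<mapsto> K / \<beta> * (1 - t |z|) powr -\<beta>\<close>, whose derivative dominates.\<close>

lemma radial_increment_le:
  fixes H :: "complex \<Rightarrow> complex"
  assumes H: "H holomorphic_on disc" and z: "z \<in> disc" and t0: "0 \<le> t0" "t0 \<le> 1"
    and \<beta>: "0 < \<beta>"
    and bound: "\<And>t. t0 \<le> t \<Longrightarrow> t \<le> 1 \<Longrightarrow>
      std_weight (\<beta> + 1) (of_real t * z) * norm (deriv H (of_real t * z)) \<le> K"
  shows "norm (H z - H (of_real t0 * z)) \<le> K / \<beta> * (1 - norm z) powr (- \<beta>)"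
proof -
  define r where "r = norm z"
  have r: "0 \<le> r" "r < 1" using z by (auto simp: r_def)
  have "0 \<le> std_weight (\<beta> + 1) (of_real 1 * z) * norm (deriv H (of_real 1 * z))"
    by (simp add: std_weight_nonneg)
  then have K: "0 \<le> K" using bound[of 1] t0 by linarith
  have pos: "0 < 1 - t * r" if "0 \<le> t" "t \<le> 1" for t
    using mult_right_mono[OF that(2) r(1)] r by simp
  have norm_tz: "norm (of_real t * z) = t * r" if "0 \<le> t" for t
    using that by (simp add: r_def norm_mult)
  have in_disc: "of_real t * z \<in> disc" if "0 \<le> t" "t \<le> 1" for t
    using norm_tz[OF that(1)] pos[OF that] by simp
  define f where "f t = H (of_real t * z)" for t :: real
  define \<phi> where "\<phi> t = K / \<beta> * (1 - t * r) powr (- \<beta>)" for t :: real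
  have df: "(f has_vector_derivative z * deriv H (of_real t * z)) (at t)" if "0 \<le> t" "t \<le> 1" for t
  proof -
    have "((\<lambda>x. of_real x * z) has_vector_derivative z) (at t)"
      by (rule has_vector_derivative_real_field) (auto intro!: derivative_eq_intros)
    moreover have "(H has_field_derivative deriv H (of_real t * z)) (at (of_real t * z))"
      using H in_disc[OF that] by (intro holomorphic_derivI) auto
    ultimately show ?thesis
      unfolding f_def using field_vector_diff_chain_at by (simp add: o_def)
  qed
  have d\<phi>: "(\<phi> has_real_derivative K * r * (1 - t * r) powr (- \<beta> - 1)) (at t)"
    if "0 \<le> t" "t \<le> 1" for t
  proof -
    have inner: "((\<lambda>t. 1 - t * r) has_real_derivative - r) (at t)"
      by (auto intro!: derivative_eq_intros)
    have "((\<lambda>t. (1 - t * r) powr (- \<beta>)) has_real_derivative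
        (- \<beta>) * (1 - t * r) powr (- \<beta> - 1) * (- r)) (at t)"
      using DERIV_chain2[OF has_real_derivative_powr[OF pos[OF that], of "- \<beta>"] inner] by simp
    then have "(\<phi> has_real_derivative K / \<beta> * ((- \<beta>) * (1 - t * r) powr (- \<beta> - 1) * (- r))) (at t)"
      unfolding \<phi>_def by (rule DERIV_cmult)
    then show ?thesis using \<beta> by (simp add: mult_ac)
  qed
  have "norm (f 1 - f t0) \<le> \<phi> 1 - \<phi> t0"
  proof (cases "t0 = 1")
    case False
    with t0 have "t0 < 1" by simp
    then show ?thesis
    proof (rule differentiable_bound_general)
      have "isCont f t \<and> isCont \<phi> t" if "t \<in> {t0..1}" for t
        using that t0 has_vector_derivative_continuous[OF df] DERIV_isCont[OF d\<phi>] by simp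
      then show "continuous_on {t0..1} f" "continuous_on {t0..1} \<phi>"
        by (auto intro!: continuous_at_imp_continuous_on)
      fix t assume t: "t0 < t" "t < 1"
      then show "(f has_vector_derivative z * deriv H (of_real t * z)) (at t)"
        and "(\<phi> has_vector_derivative K * r * (1 - t * r) powr (- \<beta> - 1)) (at t)"
        using t0 df d\<phi> by (auto simp: has_real_derivative_iff_has_vector_derivative)
      have "norm (deriv H (of_real t * z)) \<le> K * (1 - t * r) powr (- \<beta> - 1)"
        using norm_le_of_std_weight_succ_le[OF in_disc _ bound, of t] t t0 \<beta> norm_tz by auto
      then have "r * norm (deriv H (of_real t * z)) \<le> r * (K * (1 - t * r) powr (- \<beta> - 1))"
        using r(1) by (rule mult_left_mono)
      then show "norm (z * deriv H (of_real t * z)) \<le> K * r * (1 - t * r) powr (- \<beta> - 1)"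
        by (simp add: norm_mult r_def[symmetric] mult.assoc mult.left_commute)
    qed
  qed simp
  also have "\<phi> 1 - \<phi> t0 \<le> \<phi> 1" using K \<beta> by (simp add: \<phi>_def)
  finally show ?thesis by (simp add: f_def \<phi>_def r_def)
qed

lemma std_weight_mult_powr_le:
  assumes z: "z \<in> disc" and \<beta>: "0 \<le> \<beta>"
  shows "std_weight \<beta> z * (1 - norm z) powr (- \<beta>) \<le> 2 powr \<beta>"
proof -
  have pos: "0 < 1 - norm z" using z by simp
  have "1 - (norm z)\<^sup>2 = (1 + norm z) * (1 - norm z)" by (simp add: power2_eq_square algebra_simps)
  then have "std_weight \<beta> z * (1 - norm z) powr (- \<beta>)
      = (1 + norm z) powr \<beta> * ((1 - norm z) powr \<beta> * (1 - norm z) powr (- \<beta>))"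
    using pos by (simp add: std_weight_def powr_mult mult.assoc)
  also have "(1 - norm z) powr \<beta> * (1 - norm z) powr (- \<beta>) = 1"
    using pos by (simp add: powr_minus)
  also have "(1 + norm z) powr \<beta> * 1 \<le> 2 powr \<beta>"
    using z \<beta> by (simp add: powr_mono2)
  finally show ?thesis .
qed

lemma std_weight_norm_le_outside:
  fixes H :: "complex \<Rightarrow> complex"
  assumes H: "H holomorphic_on disc" and \<beta>: "0 < \<beta>" and R: "0 \<le> R"
    and bound: "\<And>w. R \<le> norm w \<Longrightarrow> norm w < 1 \<Longrightarrow> std_weight (\<beta> + 1) w * norm (deriv H w) \<le> \<epsilon>"
    and M: "\<And>w. norm w = R \<Longrightarrow> norm (H w) \<le> M"
    and z: "R \<le> norm z" "norm z < 1"
  shows "std_weight \<beta> z * norm (H z) \<le> std_weight \<beta> z * M + 2 powr \<beta> / \<beta> * \<epsilon>"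
proof -
  define t0 where "t0 = R / norm z"
  have t0: "0 \<le> t0" "t0 \<le> 1" using R z by (auto simp: t0_def divide_le_eq_1)
  have norm_tz: "norm (of_real t * z) = t * norm z" if "0 \<le> t" for t
    using that by (simp add: norm_mult)
  have R_le: "R \<le> t * norm z" if "t0 \<le> t" for t
    using that z R by (cases "z = 0") (auto simp: t0_def pos_divide_le_eq)
  have "norm (H z - H (of_real t0 * z)) \<le> \<epsilon> / \<beta> * (1 - norm z) powr (- \<beta>)"
  proof (rule radial_increment_le[OF H _ t0 \<beta>])
    fix t assume "t0 \<le> t" "t \<le> 1"
    then show "std_weight (\<beta> + 1) (of_real t * z) * norm (deriv H (of_real t * z)) \<le> \<epsilon>"
      using bound R_le norm_tz t0 z mult_left_le_one_le[of "norm z" t] by auto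
  qed (use z in simp)
  moreover have "norm (H (of_real t0 * z)) \<le> M"
    using M norm_tz[OF t0(1)] R_le[of t0] z R M[of 0] by (cases "z = 0") (auto simp: t0_def)
  ultimately have "norm (H z) \<le> M + \<epsilon> / \<beta> * (1 - norm z) powr (- \<beta>)"
    using norm_triangle_ineq2[of "H z" "H (of_real t0 * z)"] by linarith
  then have "std_weight \<beta> z * norm (H z)
      \<le> std_weight \<beta> z * M + \<epsilon> / \<beta> * (std_weight \<beta> z * (1 - norm z) powr (- \<beta>))"
    using mult_left_mono[OF _ std_weight_nonneg] by (fastforce simp: algebra_simps)
  also have "\<epsilon> / \<beta> * (std_weight \<beta> z * (1 - norm z) powr (- \<beta>)) \<le> \<epsilon> / \<beta> * 2 powr \<beta>"
  proof (rule mult_left_mono)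
    have "0 \<le> std_weight (\<beta> + 1) z * norm (deriv H z)" by (simp add: std_weight_nonneg)
    then show "0 \<le> \<epsilon> / \<beta>" using bound[OF z] \<beta> by simp
  qed (use z \<beta> in \<open>simp_all add: std_weight_mult_powr_le\<close>)
  finally show ?thesis by (simp add: mult.commute)
qed

lemma std_weight_norm_le_of_deriv:
  fixes H :: "complex \<Rightarrow> complex"
  assumes H: "H holomorphic_on disc" "H 0 = 0" and \<beta>: "0 < \<beta>"
    and bound: "\<And>w. w \<in> disc \<Longrightarrow> std_weight (\<beta> + 1) w * norm (deriv H w) \<le> K"
    and z: "z \<in> disc"
  shows "std_weight \<beta> z * norm (H z) \<le> 2 powr \<beta> / \<beta> * K"
  using std_weight_norm_le_outside[OF H(1) \<beta> order_refl, of K 0 z] bound z H(2) by simp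

lemma tendsto_std_weight_to_bdry: "0 < \<beta> \<Longrightarrow> (std_weight \<beta> \<longlongrightarrow> 0) to_bdry"
proof -
  assume \<beta>: "0 < \<beta>"
  have "eventually (\<lambda>t::real. 0 \<le> 1 - t\<^sup>2) (at_left 1)"
    by (rule eventually_at_leftI[of 0]) (auto simp: abs_square_le_1)
  then have "((\<lambda>t::real. (1 - t\<^sup>2) powr \<beta>) \<longlongrightarrow> 0) (at_left 1)"
    using \<beta> by (intro tendsto_zero_powrI[OF _ tendsto_const]) (auto intro!: tendsto_eq_intros)
  then have "(((\<lambda>t::real. (1 - t\<^sup>2) powr \<beta>) \<circ> norm) \<longlongrightarrow> 0) to_bdry"
    unfolding to_bdry_def o_def by (rule filterlim_compose) (rule filterlim_filtercomap)
  then show ?thesis by (simp add: std_weight_def[abs_def] o_def)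
qed

lemma tendsto_std_weight_of_deriv:
  fixes H :: "complex \<Rightarrow> complex"
  assumes H: "H holomorphic_on disc" and \<beta>: "0 < \<beta>"
    and lim: "((\<lambda>z. std_weight (\<beta> + 1) z * norm (deriv H z)) \<longlongrightarrow> 0) to_bdry"
  shows "((\<lambda>z. std_weight \<beta> z * norm (H z)) \<longlongrightarrow> 0) to_bdry"
  unfolding tendsto_zero_to_bdry_iff
proof (intro allI impI)
  fix e :: real assume e: "0 < e"
  define \<epsilon> where "\<epsilon> = \<beta> * e / (2 * 2 powr \<beta>)"
  have "0 < \<epsilon>" using e \<beta> by (simp add: \<epsilon>_def)
  then obtain R where R: "0 \<le> R" "R < 1"
    and near_bdry: "\<And>w. R < norm w \<Longrightarrow> norm w < 1 \<Longrightarrow> std_weight (\<beta> + 1) w * norm (deriv H w) \<le> \<epsilon>"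
    using lim unfolding tendsto_zero_to_bdry_iff by (auto simp: abs_mult std_weight_nonneg)
  define R1 where "R1 = (1 + R) / 2"
  have R1: "R < R1" "R1 < 1" using R by (simp_all add: R1_def)
  have "compact (H ` sphere 0 R1)"
    using R R1 by (intro compact_continuous_image continuous_on_subset[OF holomorphic_on_imp_continuous_on[OF H]])
      auto
  then obtain M where M: "\<And>w. norm w = R1 \<Longrightarrow> norm (H w) \<le> M"
    by (auto dest!: compact_imp_bounded simp: bounded_iff) (metis mem_sphere_0)
  have "((\<lambda>z. std_weight \<beta> z * M) \<longlongrightarrow> 0) to_bdry"
    by (rule tendsto_mult_left_zero[OF tendsto_std_weight_to_bdry[OF \<beta>]])
  then obtain R2 where R2: "R2 < 1"
    and weight_small: "\<And>z. R2 < norm z \<Longrightarrow> norm z < 1 \<Longrightarrow> norm (std_weight \<beta> z * M) \<le> e / 2"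
    using e unfolding tendsto_zero_to_bdry_iff by (meson half_gt_zero)
  have "std_weight \<beta> z * norm (H z) \<le> e" if "max R1 R2 < norm z" "norm z < 1" for z
  proof -
    have "std_weight \<beta> z * norm (H z) \<le> std_weight \<beta> z * M + 2 powr \<beta> / \<beta> * \<epsilon>"
      using R R1 that by (intro std_weight_norm_le_outside[OF H \<beta>, of R1] near_bdry M) auto
    also have "2 powr \<beta> / \<beta> * \<epsilon> = e / 2" using \<beta> by (simp add: \<epsilon>_def)
    finally show ?thesis using weight_small[of z] that by simp
  qed
  then show "\<exists>R. 0 \<le> R \<and> R < 1 \<and> (\<forall>z. R < norm z \<longrightarrow> norm z < 1 \<longrightarrow>
      norm (std_weight \<beta> z * norm (H z)) \<le> e)"
    using R R1 R2 by (intro exI[of _ "max R1 R2"]) (auto simp: std_weight_nonneg)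
qed

text \<open>Cauchy's estimate on the disk of radius \<open>(1 - |z|) / 2\<close> about \<open>z\<close>, on whose boundary
  the weight is comparable to its value at \<open>z\<close>.\<close>

lemma std_weight_deriv_le:
  fixes H :: "complex \<Rightarrow> complex"
  assumes H: "H holomorphic_on disc" and \<beta>: "0 \<le> \<beta>"
    and bound: "\<And>w. R < norm w \<Longrightarrow> norm w < 1 \<Longrightarrow> std_weight \<beta> w * norm (H w) \<le> \<epsilon>"
    and z: "(1 + 2 * R) / 3 < norm z" "norm z < 1"
  shows "std_weight (\<beta> + 1) z * norm (deriv H z) \<le> 4 powr (\<beta> + 1) * \<epsilon>"
proof -
  define \<rho> where "\<rho> = (1 - norm z) / 2"
  have \<rho>: "0 < \<rho>" using z by (simp add: \<rho>_def)
  have "cball z \<rho> \<subseteq> disc"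
  proof
    fix w assume "w \<in> cball z \<rho>"
    then have "norm (w - z) \<le> \<rho>" by (simp add: dist_norm norm_minus_commute)
    then show "w \<in> disc" using norm_triangle_ineq2[of w z] z by (simp add: \<rho>_def)
  qed
  then have holo: "H holomorphic_on ball z \<rho>" and cont: "continuous_on (cball z \<rho>) H"
    using holomorphic_on_subset[OF H] ball_subset_cball holomorphic_on_imp_continuous_on by blast+
  have circle: "norm (H w) \<le> \<epsilon> / \<rho> powr \<beta>" if w: "norm (z - w) = \<rho>" for w
  proof -
    have w_bdry: "R < norm w" "norm w < 1"
      using w z norm_triangle_ineq2[of z w] norm_triangle_ineq3[of w z]
      by (simp_all add: \<rho>_def norm_minus_commute)
    then have "\<rho> \<le> 1 - (norm w)\<^sup>2"
      using w norm_triangle_ineq2[of w z] one_minus_norm_le_one_minus_norm_sq[of w]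
      by (simp add: \<rho>_def norm_minus_commute)
    then have "\<rho> powr \<beta> * norm (H w) \<le> std_weight \<beta> w * norm (H w)"
      unfolding std_weight_def using \<rho> \<beta> by (intro mult_right_mono powr_mono2) auto
    also have "\<dots> \<le> \<epsilon>" by (rule bound[OF w_bdry])
    finally show ?thesis using \<rho> by (simp add: pos_le_divide_eq mult.commute)
  qed
  have "norm (deriv H z) \<le> \<epsilon> / \<rho> powr \<beta> / \<rho>"
    using Cauchy_inequality[OF holo cont \<rho> circle, of 1] by simp
  moreover have "std_weight (\<beta> + 1) z \<le> (4 * \<rho>) powr (\<beta> + 1)"
  proof -
    have "1 - (norm z)\<^sup>2 = (1 - norm z) * (1 + norm z)" by (simp add: power2_eq_square algebra_simps)
    also have "\<dots> \<le> (1 - norm z) * 2" using z by (intro mult_left_mono) auto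
    also have "\<dots> = 4 * \<rho>" by (simp add: \<rho>_def)
    finally show ?thesis
      unfolding std_weight_def using \<beta> one_minus_norm_le_one_minus_norm_sq[of z] z
      by (intro powr_mono2) auto
  qed
  ultimately have "std_weight (\<beta> + 1) z * norm (deriv H z) \<le> (4 * \<rho>) powr (\<beta> + 1) * (\<epsilon> / \<rho> powr \<beta> / \<rho>)"
    by (intro mult_mono) (auto simp: std_weight_nonneg)
  also have "\<dots> = 4 powr (\<beta> + 1) * \<epsilon>"
    using \<rho> by (simp add: powr_mult powr_add field_simps)
  finally show ?thesis .
qed

lemma tendsto_std_weight_deriv:
  fixes H :: "complex \<Rightarrow> complex"
  assumes H: "H holomorphic_on disc" and \<beta>: "0 \<le> \<beta>"
    and lim: "((\<lambda>z. std_weight \<beta> z * norm (H z)) \<longlongrightarrow> 0) to_bdry"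
  shows "((\<lambda>z. std_weight (\<beta> + 1) z * norm (deriv H z)) \<longlongrightarrow> 0) to_bdry"
  unfolding tendsto_zero_to_bdry_iff
proof (intro allI impI)
  fix e :: real assume "0 < e"
  then have "0 < e / 4 powr (\<beta> + 1)" by simp
  then obtain R where R: "0 \<le> R" "R < 1"
    and bound: "\<And>w. R < norm w \<Longrightarrow> norm w < 1 \<Longrightarrow> std_weight \<beta> w * norm (H w) \<le> e / 4 powr (\<beta> + 1)"
    using lim unfolding tendsto_zero_to_bdry_iff by (auto simp: abs_mult std_weight_nonneg)
  then have "std_weight (\<beta> + 1) z * norm (deriv H z) \<le> e"
    if "(1 + 2 * R) / 3 < norm z" "norm z < 1" for z
    using std_weight_deriv_le[OF H \<beta> bound that] by simp
  then show "\<exists>R. 0 \<le> R \<and> R < 1 \<and> (\<forall>z. R < norm z \<longrightarrow> norm z < 1 \<longrightarrow>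
      norm (std_weight (\<beta> + 1) z * norm (deriv H z)) \<le> e)"
    using R by (intro exI[of _ "(1 + 2 * R) / 3"]) (auto simp: std_weight_nonneg)
qed

section \<open>Banach spaces with bounded point evaluations\<close>

locale bpe_space =
  fixes X :: "(complex \<Rightarrow> complex) set" and N :: "(complex \<Rightarrow> complex) \<Rightarrow> real"
  assumes banach_bpe: "banach_bpe X N"

begin

lemma banach_bpe_conjuncts:
  shows "\<forall>f\<in>X. f holomorphic_on disc" and "(\<lambda>z. 0) \<in> X"
    and "\<forall>f\<in>X. \<forall>g\<in>X. (\<lambda>z. f z + g z) \<in> X" and "\<forall>f\<in>X. \<forall>c. (\<lambda>z. c * f z) \<in> X"
    and "\<forall>f\<in>X. 0 \<le> N f" and "\<forall>f\<in>X. \<forall>g\<in>X. N (\<lambda>z. f z + g z) \<le> N f + N g"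
    and "\<forall>f\<in>X. \<forall>c. N (\<lambda>z. c * f z) = norm c * N f"
    and "\<forall>F. (\<forall>n. F n \<in> X) \<longrightarrow> (\<forall>e>0. \<exists>M. \<forall>m\<ge>M. \<forall>n\<ge>M. N (\<lambda>z. F m z - F n z) < e) \<longrightarrow>
          (\<exists>f\<in>X. (\<lambda>n. N (\<lambda>z. F n z - f z)) \<longlonglongrightarrow> 0)"
    and "\<forall>z\<in>disc. \<exists>C. \<forall>f\<in>X. norm (f z) \<le> C * N f"
  using banach_bpe unfolding banach_bpe_def by - (elim conjE, assumption)+

lemma holomorphic: "f \<in> X \<Longrightarrow> f holomorphic_on disc"
  using banach_bpe_conjuncts(1) by blast

lemma zero_mem: "(\<lambda>z. 0) \<in> X"
  by (fact banach_bpe_conjuncts(2))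

lemma add_mem: "f \<in> X \<Longrightarrow> g \<in> X \<Longrightarrow> (\<lambda>z. f z + g z) \<in> X"
  using banach_bpe_conjuncts(3) by blast

lemma scale_mem: "f \<in> X \<Longrightarrow> (\<lambda>z. c * f z) \<in> X"
  using banach_bpe_conjuncts(4) by blast

lemma norm_nonneg: "f \<in> X \<Longrightarrow> 0 \<le> N f"
  using banach_bpe_conjuncts(5) by blast

lemma norm_add_le: "f \<in> X \<Longrightarrow> g \<in> X \<Longrightarrow> N (\<lambda>z. f z + g z) \<le> N f + N g"
  using banach_bpe_conjuncts(6) by blast

lemma norm_scale: "f \<in> X \<Longrightarrow> N (\<lambda>z. c * f z) = norm c * N f"
  using banach_bpe_conjuncts(7) by blast

lemma complete:
  "\<lbrakk>\<And>n. F n \<in> X; \<And>e. e > 0 \<Longrightarrow> \<exists>M. \<forall>m\<ge>M. \<forall>n\<ge>M. N (\<lambda>z. F m z - F n z) < e\<rbrakk>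
    \<Longrightarrow> \<exists>f\<in>X. (\<lambda>n. N (\<lambda>z. F n z - f z)) \<longlonglongrightarrow> 0"
  using banach_bpe_conjuncts(8) by blast

lemma point_evaluation_bounded: "z \<in> disc \<Longrightarrow> \<exists>C. \<forall>f\<in>X. norm (f z) \<le> C * N f"
  using banach_bpe_conjuncts(9) by blast

lemma diff_mem: "f \<in> X \<Longrightarrow> g \<in> X \<Longrightarrow> (\<lambda>z. f z - g z) \<in> X"
  using add_mem[of f "\<lambda>z. (-1) * g z"] scale_mem[of g "-1"] by simp

lemma norm_diff_self: "f \<in> X \<Longrightarrow> N (\<lambda>z. f z - f z) = 0"
  using norm_scale[of f 0] by simp

lemma norm_diff_commute: "f \<in> X \<Longrightarrow> g \<in> X \<Longrightarrow> N (\<lambda>z. f z - g z) = N (\<lambda>z. g z - f z)"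
  using norm_scale[OF diff_mem[of g f], of "-1"] by simp

lemma norm_diff_triangle:
  "f \<in> X \<Longrightarrow> g \<in> X \<Longrightarrow> h \<in> X \<Longrightarrow> N (\<lambda>z. f z - h z) \<le> N (\<lambda>z. f z - g z) + N (\<lambda>z. g z - h z)"
  using norm_add_le[OF diff_mem[of f g] diff_mem[of g h]] by simp

lemma halving_steps_dist_le:
  assumes mem: "\<And>n. xs n \<in> X" and step: "\<And>n. N (\<lambda>z. xs (Suc n) z - xs n z) \<le> r n"
    and halving: "\<And>n. r (Suc n) \<le> r n / 2" and "n \<le> m"
  shows "N (\<lambda>z. xs m z - xs n z) \<le> 2 * r n"
proof -
  have tail: "N (\<lambda>z. xs (n + k) z - xs n z) \<le> 2 * r n - 2 * r (n + k)" for k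
  proof (induction k)
    case 0
    then show ?case using norm_diff_self[OF mem] by simp
  next
    case (Suc k)
    have "N (\<lambda>z. xs (Suc (n + k)) z - xs n z)
        \<le> N (\<lambda>z. xs (Suc (n + k)) z - xs (n + k) z) + N (\<lambda>z. xs (n + k) z - xs n z)"
      by (rule norm_diff_triangle[OF mem mem mem])
    then show ?case using Suc step[of "n + k"] halving[of "n + k"] by simp
  qed
  have "0 \<le> r m"
    using step[of m] norm_nonneg[OF diff_mem[OF mem mem], of "Suc m" m] by linarith
  then show ?thesis using tail[of "m - n"] \<open>n \<le> m\<close> by simp
qed

lemma halving_steps_converge:
  assumes mem: "\<And>n. xs n \<in> X" and step: "\<And>n. N (\<lambda>z. xs (Suc n) z - xs n z) \<le> r n"
    and halving: "\<And>n. r (Suc n) \<le> r n / 2"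
  obtains x where "x \<in> X" and "\<And>n. N (\<lambda>z. x z - xs n z) \<le> 2 * r n"
proof -
  note dist_le = halving_steps_dist_le[of xs r, OF mem step halving]
  have r_nonneg: "0 \<le> r n" for n
    using step[of n] norm_nonneg[OF diff_mem[OF mem mem], of "Suc n" n] by linarith
  have r_le: "norm (r n) \<le> r 0 * (1/2) ^ n" for n
  proof (induction n)
    case (Suc n)
    then show ?case using halving[of n] r_nonneg[of "Suc n"] r_nonneg[of n] by simp
  qed (simp add: r_nonneg)
  have "(\<lambda>n. r 0 * (1/2::real) ^ n) \<longlonglongrightarrow> 0"
    by (intro tendsto_mult_right_zero LIMSEQ_power_zero) simp
  then have r_lim: "r \<longlonglongrightarrow> 0"
    by (rule Lim_null_comparison[OF always_eventually, rotated]) (use r_le in blast)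
  have cauchy: "\<exists>M. \<forall>m\<ge>M. \<forall>n\<ge>M. N (\<lambda>z. xs m z - xs n z) < e" if "e > 0" for e
  proof -
    have "eventually (\<lambda>n. 2 * r n < e) sequentially"
      using order_tendstoD(2)[OF tendsto_mult_right_zero[OF r_lim, of 2] \<open>e > 0\<close>] by simp
    then obtain M where small: "\<And>n. M \<le> n \<Longrightarrow> 2 * r n < e"
      unfolding eventually_sequentially by blast
    have "N (\<lambda>z. xs m z - xs n z) < e" if "M \<le> m" "M \<le> n" for m n
      using dist_le[of n m] dist_le[of m n] small that norm_diff_commute[OF mem mem, of m n]
      by (cases "n \<le> m") force+
    then show ?thesis by blast
  qed
  obtain x where x: "x \<in> X" and lim: "(\<lambda>m. N (\<lambda>z. xs m z - x z)) \<longlonglongrightarrow> 0"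
    using complete[OF mem cauchy] by blast
  have "N (\<lambda>z. x z - xs n z) \<le> 2 * r n" for n
  proof (rule tendsto_lowerbound)
    show "(\<lambda>m. N (\<lambda>z. xs m z - x z) + 2 * r n) \<longlonglongrightarrow> 2 * r n"
      using tendsto_add[OF lim tendsto_const[of "2 * r n"]] by simp
    have "N (\<lambda>z. x z - xs n z) \<le> N (\<lambda>z. xs m z - x z) + 2 * r n" if "n \<le> m" for m
      using norm_diff_triangle[OF x mem mem, of n m] norm_diff_commute[OF x mem, of m] dist_le[OF that]
      by linarith
    then show "eventually (\<lambda>m. N (\<lambda>z. x z - xs n z) \<le> N (\<lambda>z. xs m z - x z) + 2 * r n) sequentially"
      unfolding eventually_sequentially by blast
  qed simp
  with x show ?thesis by (rule that)
qed

lemma bounded_functional_small_near_zero: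
  assumes "\<exists>C. \<forall>f\<in>X. norm (l f) \<le> C * N f" and "0 < r"
  obtains s where "0 < s" "s \<le> r" "\<And>f. f \<in> X \<Longrightarrow> N f \<le> s \<Longrightarrow> norm (l f) < 1"
proof -
  obtain C where C: "\<And>f. f \<in> X \<Longrightarrow> norm (l f) \<le> C * N f" using assms(1) by blast
  define s where "s = min r (1 / (2 * (\<bar>C\<bar> + 1)))"
  have "norm (l f) < 1" if "f \<in> X" "N f \<le> s" for f
  proof -
    have "norm (l f) \<le> \<bar>C\<bar> * s"
      using C[OF that(1)] mult_mono[OF abs_ge_self[of C] that(2)] norm_nonneg[OF that(1)] by force
    also have "\<dots> \<le> \<bar>C\<bar> / (2 * (\<bar>C\<bar> + 1))"
      using mult_left_mono[OF min.cobounded2[of r "1 / (2 * (\<bar>C\<bar> + 1))"], of "\<bar>C\<bar>"]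
      by (simp add: s_def)
    also have "\<dots> < 1" by (simp add: field_simps)
    finally show ?thesis .
  qed
  moreover have "0 < s" "s \<le> r" using assms(2) by (auto simp: s_def)
  ultimately show ?thesis using that by blast
qed

text \<open>Gliding hump: one of \<open>x \<plusminus> y\<close> inherits the size of \<open>L i y\<close>.\<close>

lemma unbounded_functionals_large_near:
  fixes L :: "'i \<Rightarrow> (complex \<Rightarrow> complex) \<Rightarrow> complex"
  assumes add: "\<And>i f g. i \<in> I \<Longrightarrow> f \<in> X \<Longrightarrow> g \<in> X \<Longrightarrow> L i (\<lambda>w. f w + g w) = L i f + L i g"
    and scale: "\<And>i f c. i \<in> I \<Longrightarrow> f \<in> X \<Longrightarrow> L i (\<lambda>w. c * f w) = c * L i f"
    and bounded: "\<And>i. i \<in> I \<Longrightarrow> \<exists>C. \<forall>f\<in>X. norm (L i f) \<le> C * N f"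
    and unbounded: "\<not> (\<exists>C. \<forall>i\<in>I. \<forall>f\<in>X. norm (L i f) \<le> C * N f)"
    and "x \<in> X" and "0 < r"
  obtains i y where "i \<in> I" "y \<in> X" "N (\<lambda>w. y w - x w) \<le> r" "K < norm (L i y)"
proof -
  obtain i f where i: "i \<in> I" and f: "f \<in> X" and large: "(\<bar>K\<bar> / r + 1) * N f < norm (L i f)"
    using unbounded by (meson not_le)
  have "N f \<noteq> 0"
    using bounded[OF i] f large by (metis mult_zero_left mult_zero_right norm_ge_zero not_le)
  then have Nf: "0 < N f" using norm_nonneg[OF f] by linarith
  define y where "y = (\<lambda>w. complex_of_real (r / N f) * f w)"
  have y: "y \<in> X" unfolding y_def by (rule scale_mem[OF f])
  have "N y = norm (complex_of_real (r / N f)) * N f"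
    unfolding y_def by (rule norm_scale[OF f])
  then have Ny: "N y = r" using Nf \<open>0 < r\<close> by (simp add: norm_divide)
  have "L i y = complex_of_real (r / N f) * L i f"
    unfolding y_def by (rule scale[OF i f])
  then have "norm (L i y) = r / N f * norm (L i f)"
    using Nf \<open>0 < r\<close> by (simp add: norm_mult norm_divide)
  also have "\<dots> > r / N f * ((\<bar>K\<bar> / r + 1) * N f)"
    using large Nf \<open>0 < r\<close> by (intro mult_strict_left_mono) auto
  also have "r / N f * ((\<bar>K\<bar> / r + 1) * N f) = \<bar>K\<bar> + r"
    using Nf \<open>0 < r\<close> by (simp add: field_simps)
  finally have Ly: "\<bar>K\<bar> < norm (L i y)" using \<open>0 < r\<close> by linarith
  have plus: "L i (\<lambda>w. x w + y w) = L i x + L i y"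
    by (rule add[OF i \<open>x \<in> X\<close> y])
  have "L i (\<lambda>w. x w + (-1) * y w) = L i x + L i (\<lambda>w. (-1) * y w)"
    by (rule add[OF i \<open>x \<in> X\<close> scale_mem[OF y]])
  also have "L i (\<lambda>w. (-1) * y w) = (-1) * L i y" by (rule scale[OF i y])
  finally have minus: "L i (\<lambda>w. x w + (-1) * y w) = L i x - L i y" by simp
  have "2 * norm (L i y) \<le> norm (L i (\<lambda>w. x w + y w)) + norm (L i (\<lambda>w. x w + (-1) * y w))"
    unfolding plus minus using norm_triangle_ineq4[of "L i x + L i y" "L i x - L i y"] by simp
  then consider "K < norm (L i (\<lambda>w. x w + y w))" | "K < norm (L i (\<lambda>w. x w + (-1) * y w))"
    using Ly by linarith
  then show ?thesis
  proof cases
    case 1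
    then show ?thesis using Ny by (intro that[OF i add_mem[OF \<open>x \<in> X\<close> y]]) simp_all
  next
    case 2
    then show ?thesis using Ny norm_scale[OF y, of "-1"]
      by (intro that[OF i add_mem[OF \<open>x \<in> X\<close> scale_mem[OF y, of "-1"]]]) simp_all
  qed
qed

theorem uniform_boundedness:
  fixes L :: "'i \<Rightarrow> (complex \<Rightarrow> complex) \<Rightarrow> complex"
  assumes add: "\<And>i f g. i \<in> I \<Longrightarrow> f \<in> X \<Longrightarrow> g \<in> X \<Longrightarrow> L i (\<lambda>w. f w + g w) = L i f + L i g"
    and scale: "\<And>i f c. i \<in> I \<Longrightarrow> f \<in> X \<Longrightarrow> L i (\<lambda>w. c * f w) = c * L i f"
    and bounded: "\<And>i. i \<in> I \<Longrightarrow> \<exists>C. \<forall>f\<in>X. norm (L i f) \<le> C * N f"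
    and pointwise: "\<And>f. f \<in> X \<Longrightarrow> \<exists>B. \<forall>i\<in>I. norm (L i f) \<le> B"
  shows "\<exists>C. \<forall>i\<in>I. \<forall>f\<in>X. norm (L i f) \<le> C * N f"
proof (rule ccontr)
  assume unbounded: "\<not> ?thesis"
  define P where "P n xr \<longleftrightarrow> fst xr \<in> X \<and> 0 < snd xr"
    for n :: nat and xr :: "(complex \<Rightarrow> complex) \<times> real"
  \<comment> \<open>One hump: the next point is close to the current one, some \<open>L i\<close> exceeds \<open>n + 1\<close> there,
    and the next radius is so small that all later corrections change \<open>L i\<close> by less than 1.\<close>
  define Q where "Q n xr ys \<longleftrightarrow> N (\<lambda>w. fst ys w - fst xr w) \<le> snd xr \<and> snd ys \<le> snd xr / 2 \<and>
    (\<exists>i\<in>I. real n + 1 < norm (L i (fst ys)) \<and> (\<forall>f\<in>X. N f \<le> 2 * snd ys \<longrightarrow> norm (L i f) < 1))"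
    for n :: nat and xr ys :: "(complex \<Rightarrow> complex) \<times> real"
  have "\<exists>ys. P (Suc n) ys \<and> Q n xr ys" if "P n xr" for n xr
  proof -
    obtain x r where xr: "xr = (x, r)" "x \<in> X" "0 < r" using \<open>P n xr\<close> by (cases xr) (auto simp: P_def)
    obtain i y where i: "i \<in> I" and y: "y \<in> X" "N (\<lambda>w. y w - x w) \<le> r" "real n + 1 < norm (L i y)"
      using unbounded_functionals_large_near[OF add scale bounded unbounded xr(2,3)] by blast
    obtain s where "0 < s" "s \<le> r" "\<And>f. f \<in> X \<Longrightarrow> N f \<le> s \<Longrightarrow> norm (L i f) < 1"
      using bounded_functional_small_near_zero[OF bounded[OF i] xr(3)] by blast
    then show ?thesis using xr y i by (intro exI[of _ "(y, s / 2)"]) (auto simp: P_def Q_def)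
  qed
  moreover have "P 0 ((\<lambda>z. 0), 1)" using zero_mem by (simp add: P_def)
  ultimately obtain seq where seq: "\<And>n. P n (seq n) \<and> Q n (seq n) (seq (Suc n))"
    using dependent_nat_choice[of P Q] by metis
  define xs where "xs = fst \<circ> seq"
  define r where "r = snd \<circ> seq"
  have mem: "xs n \<in> X" for n using seq[of n] by (simp add: P_def xs_def)
  have step: "N (\<lambda>w. xs (Suc n) w - xs n w) \<le> r n" and halving: "r (Suc n) \<le> r n / 2" for n
    using seq[of n] by (simp_all add: Q_def xs_def r_def)
  obtain x where x: "x \<in> X" and near: "\<And>n. N (\<lambda>w. x w - xs n w) \<le> 2 * r n"
    using halving_steps_converge[of xs r, OF mem step halving] by blast
  obtain B where B: "\<And>i. i \<in> I \<Longrightarrow> norm (L i x) \<le> B" using pointwise[OF x] by blast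
  obtain n :: nat where "B \<le> real n" using real_arch_simple by blast
  obtain i where i: "i \<in> I" and hump: "real n + 1 < norm (L i (xs (Suc n)))"
    and small: "\<And>f. f \<in> X \<Longrightarrow> N f \<le> 2 * r (Suc n) \<Longrightarrow> norm (L i f) < 1"
    using seq[of n] by (auto simp: Q_def xs_def r_def)
  have "L i (xs (Suc n)) = L i x + L i (\<lambda>w. xs (Suc n) w - x w)"
    using add[OF i x diff_mem[OF mem x]] by simp
  then have "norm (L i (xs (Suc n))) \<le> norm (L i x) + norm (L i (\<lambda>w. xs (Suc n) w - x w))"
    by (metis norm_triangle_ineq)
  moreover have "norm (L i (\<lambda>w. xs (Suc n) w - x w)) < 1"
    using small[OF diff_mem[OF mem x]] near norm_diff_commute[OF x mem] by metis
  ultimately show False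
    using hump B[OF i] \<open>B \<le> real n\<close> by linarith
qed

text \<open>The hypothesis \<open>null\<close> is the weak-star convergence \<open>a(z) \<delta>\<^bsub>w(z)\<^esub> \<rightarrow> 0\<close> in \<open>X*\<close>.\<close>

lemma weighted_evaluations_bounded:
  assumes a: "continuous_on disc a" and w: "continuous_on disc w" "w ` disc \<subseteq> disc"
    and null: "\<And>f. f \<in> X \<Longrightarrow> ((\<lambda>z. a z * f (w z)) \<longlongrightarrow> 0) to_bdry"
  shows "\<exists>C. \<forall>z\<in>disc. \<forall>f\<in>X. norm (a z * f (w z)) \<le> C * N f"
proof (rule uniform_boundedness)
  fix z assume "z \<in> disc"
  then obtain C where C: "\<And>f. f \<in> X \<Longrightarrow> norm (f (w z)) \<le> C * N f"
    using point_evaluation_bounded w(2) by blast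
  have "norm (a z * f (w z)) \<le> (norm (a z) * C) * N f" if "f \<in> X" for f
    using mult_left_mono[OF C[OF that], of "norm (a z)"] by (simp add: norm_mult mult.assoc)
  then show "\<exists>C. \<forall>f\<in>X. norm (a z * f (w z)) \<le> C * N f" by blast
next
  fix f assume f: "f \<in> X"
  have "continuous_on disc (\<lambda>z. f (w z))"
    using continuous_on_compose2[OF holomorphic_on_imp_continuous_on[OF holomorphic[OF f]] w] .
  then show "\<exists>B. \<forall>z\<in>disc. norm (a z * f (w z)) \<le> B"
    by (intro bounded_on_disc_if_tendsto_zero_to_bdry continuous_on_mult a null f)
qed (simp_all add: distrib_left mult.left_commute)

theorem Wop_bounded_into_Hv0_iff:
  assumes v: "continuous_on disc v" "\<And>z. z \<in> disc \<Longrightarrow> 0 \<le> v z"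
    and u: "u holomorphic_on disc" and \<phi>: "\<phi> holomorphic_on disc" "\<phi> ` disc \<subseteq> disc"
  shows "bounded_into X N (Wop u \<phi>) (Hv0 v) (Hv_norm v) \<longleftrightarrow>
    (\<forall>f\<in>X. ((\<lambda>z. of_real (v z) * u z * f (\<phi> z)) \<longlongrightarrow> 0) to_bdry)"
proof -
  have weighted: "((\<lambda>z. v z * norm (Wop u \<phi> f z)) \<longlongrightarrow> 0) to_bdry \<longleftrightarrow>
      ((\<lambda>z. of_real (v z) * u z * f (\<phi> z)) \<longlongrightarrow> 0) to_bdry" for f
    using weighted_tendsto_to_bdry_iff[of v "Wop u \<phi> f", OF v(2)] by (simp add: Wop_def mult.assoc)
  have holo: "Wop u \<phi> f holomorphic_on disc" if "f \<in> X" for f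
    unfolding Wop_def using holomorphic_on_compose_gen[OF \<phi>(1) holomorphic[OF that] \<phi>(2)]
    by (intro holomorphic_on_mult[OF u]) (simp add: o_def)
  show ?thesis
  proof
    assume "bounded_into X N (Wop u \<phi>) (Hv0 v) (Hv_norm v)"
    then show "\<forall>f\<in>X. ((\<lambda>z. of_real (v z) * u z * f (\<phi> z)) \<longlongrightarrow> 0) to_bdry"
      unfolding bounded_into_def Hv0_def using weighted by blast
  next
    assume null: "\<forall>f\<in>X. ((\<lambda>z. of_real (v z) * u z * f (\<phi> z)) \<longlongrightarrow> 0) to_bdry"
    have "continuous_on disc (\<lambda>z. of_real (v z) * u z)"
      using v(1) holomorphic_on_imp_continuous_on[OF u] by (intro continuous_intros)
    then obtain C where C: "\<And>z f. z \<in> disc \<Longrightarrow> f \<in> X \<Longrightarrow> norm (of_real (v z) * u z * f (\<phi> z)) \<le> C * N f"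
      using weighted_evaluations_bounded[OF _ holomorphic_on_imp_continuous_on[OF \<phi>(1)] \<phi>(2)] null
      by blast
    have "Hv_norm v (Wop u \<phi> f) \<le> C * N f" if "f \<in> X" for f
      using C[OF _ that] v(2) by (intro Hv_norm_le) (simp add: Wop_def norm_mult mult.assoc)
    then show "bounded_into X N (Wop u \<phi>) (Hv0 v) (Hv_norm v)"
      unfolding bounded_into_def Hv0_def using holo weighted null by blast
  qed
qed

theorem Top_bounded_into_Bv0_iff:
  assumes v: "continuous_on disc v" "\<And>z. z \<in> disc \<Longrightarrow> 0 \<le> v z" and g: "g holomorphic_on disc"
  shows "bounded_into X N (Top g) (Bv0 v) (Bv_norm v) \<longleftrightarrow>
    (\<forall>f\<in>X. ((\<lambda>z. of_real (v z) * deriv g z * f z) \<longlongrightarrow> 0) to_bdry)"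
proof -
  have deriv_Top': "deriv (Top g f) z = deriv g z * f z" if "f \<in> X" "z \<in> disc" for f z
    using deriv_Top[OF g holomorphic[OF that(1)] that(2)] by simp
  have weighted: "((\<lambda>z. v z * norm (deriv (Top g f) z)) \<longlongrightarrow> 0) to_bdry \<longleftrightarrow>
      ((\<lambda>z. of_real (v z) * deriv g z * f z) \<longlongrightarrow> 0) to_bdry" if "f \<in> X" for f
    by (rule tendsto_weighted_deriv_Top_iff[OF v(2) g holomorphic[OF that]])
  show ?thesis
  proof
    assume "bounded_into X N (Top g) (Bv0 v) (Bv_norm v)"
    then show "\<forall>f\<in>X. ((\<lambda>z. of_real (v z) * deriv g z * f z) \<longlongrightarrow> 0) to_bdry"
      unfolding bounded_into_def Bv0_def using weighted by blast
  next
    assume null: "\<forall>f\<in>X. ((\<lambda>z. of_real (v z) * deriv g z * f z) \<longlongrightarrow> 0) to_bdry"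
    have "continuous_on disc (\<lambda>z. of_real (v z) * deriv g z)"
      using v(1) holomorphic_on_imp_continuous_on[OF holomorphic_deriv[OF g]]
      by (intro continuous_intros) auto
    then obtain C where C: "\<And>z f. z \<in> disc \<Longrightarrow> f \<in> X \<Longrightarrow> norm (of_real (v z) * deriv g z * f z) \<le> C * N f"
      using weighted_evaluations_bounded[of _ "\<lambda>z. z"] null by fastforce
    have "Bv_norm v (Top g f) \<le> C * N f" if "f \<in> X" for f
      using Bv_norm_le[of v "Top g f" "C * N f"] C[OF _ that] v(2)
      by (simp add: Top_0 deriv_Top'[OF that] norm_mult mult.assoc)
    then show "bounded_into X N (Top g) (Bv0 v) (Bv_norm v)"
      unfolding bounded_into_def Bv0_def
      using Top_holomorphic[OF g holomorphic] weighted null by blast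
  qed
qed

theorem Top_bounded_into_Hv0_std_weight_iff:
  assumes \<beta>: "0 < \<beta>" and g: "g holomorphic_on disc"
  shows "bounded_into X N (Top g) (Hv0 (std_weight \<beta>)) (Hv_norm (std_weight \<beta>)) \<longleftrightarrow>
    (\<forall>f\<in>X. ((\<lambda>z. of_real (std_weight (\<beta> + 1) z) * deriv g z * f z) \<longlongrightarrow> 0) to_bdry)"
proof -
  have weighted: "((\<lambda>z. std_weight (\<beta> + 1) z * norm (deriv (Top g f) z)) \<longlongrightarrow> 0) to_bdry \<longleftrightarrow>
      ((\<lambda>z. of_real (std_weight (\<beta> + 1) z) * deriv g z * f z) \<longlongrightarrow> 0) to_bdry" if "f \<in> X" for f
    by (rule tendsto_weighted_deriv_Top_iff[OF _ g holomorphic[OF that]]) (simp add: std_weight_nonneg)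
  have Top: "Top g f holomorphic_on disc" if "f \<in> X" for f
    by (rule Top_holomorphic[OF g holomorphic[OF that]])
  show ?thesis
  proof
    assume "bounded_into X N (Top g) (Hv0 (std_weight \<beta>)) (Hv_norm (std_weight \<beta>))"
    then have "((\<lambda>z. std_weight \<beta> z * norm (Top g f z)) \<longlongrightarrow> 0) to_bdry" if "f \<in> X" for f
      using that unfolding bounded_into_def Hv0_def by blast
    then show "\<forall>f\<in>X. ((\<lambda>z. of_real (std_weight (\<beta> + 1) z) * deriv g z * f z) \<longlongrightarrow> 0) to_bdry"
      using tendsto_std_weight_deriv[OF Top] \<beta> weighted by auto
  next
    assume null: "\<forall>f\<in>X. ((\<lambda>z. of_real (std_weight (\<beta> + 1) z) * deriv g z * f z) \<longlongrightarrow> 0) to_bdry"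
    have "continuous_on disc (\<lambda>z. of_real (std_weight (\<beta> + 1) z) * deriv g z)"
      using holomorphic_on_imp_continuous_on[OF holomorphic_deriv[OF g]]
      by (auto simp: std_weight_def abs_square_eq_1 intro!: continuous_intros)
    then obtain C where C: "\<And>z f. z \<in> disc \<Longrightarrow> f \<in> X \<Longrightarrow>
        norm (of_real (std_weight (\<beta> + 1) z) * deriv g z * f z) \<le> C * N f"
      using weighted_evaluations_bounded[of _ "\<lambda>z. z"] null by fastforce
    have "Hv_norm (std_weight \<beta>) (Top g f) \<le> 2 powr \<beta> / \<beta> * C * N f" if f: "f \<in> X" for f
    proof (rule Hv_norm_le)
      fix z assume "z \<in> disc"
      then show "std_weight \<beta> z * norm (Top g f z) \<le> 2 powr \<beta> / \<beta> * C * N f"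
        using std_weight_norm_le_of_deriv[OF Top[OF f] Top_0 \<beta>, of "C * N f"] C[OF _ f]
        by (simp add: deriv_Top[OF g holomorphic[OF f]] norm_mult std_weight_nonneg mult_ac)
    qed
    moreover have "Top g f \<in> Hv0 (std_weight \<beta>)" if "f \<in> X" for f
      unfolding Hv0_def using Top[OF that] weighted[OF that] null that
      by (auto intro: tendsto_std_weight_of_deriv[OF Top[OF that] \<beta>])
    ultimately show "bounded_into X N (Top g) (Hv0 (std_weight \<beta>)) (Hv_norm (std_weight \<beta>))"
      unfolding bounded_into_def by (metis mult.assoc)
  qed
qed

end

theorem corollary2p4:
  fixes v :: "complex \<Rightarrow> real" and X :: "(complex \<Rightarrow> complex) set"
    and N :: "(complex \<Rightarrow> complex) \<Rightarrow> real" and \<beta> :: real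
    and u g \<phi> :: "complex \<Rightarrow> complex"
  assumes "typical_weight v" and "banach_bpe X N" and "\<beta> > 0"
    and "u holomorphic_on disc" and "g holomorphic_on disc"
    and "\<phi> holomorphic_on disc" and "\<phi> ` disc \<subseteq> disc"
  shows "(bounded_into X N (Wop u \<phi>) (Hv0 v) (Hv_norm v) \<longleftrightarrow>
           (\<forall>f\<in>X. ((\<lambda>z. of_real (v z) * u z * f (\<phi> z)) \<longlongrightarrow> 0) to_bdry))
       \<and> (bounded_into X N (Top g) (Bv0 v) (Bv_norm v) \<longleftrightarrow>
           (\<forall>f\<in>X. ((\<lambda>z. of_real (v z) * deriv g z * f z) \<longlongrightarrow> 0) to_bdry))
       \<and> (bounded_into X N (Top g) (Hv0 (std_weight \<beta>)) (Hv_norm (std_weight \<beta>)) \<longleftrightarrow>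
           (\<forall>f\<in>X. ((\<lambda>z. of_real ((1 - (norm z)\<^sup>2) powr (\<beta> + 1)) * deriv g z * f z) \<longlongrightarrow> 0) to_bdry))"
proof -
  interpret bpe_space X N by (rule bpe_space.intro) fact
  note v = typical_weight_continuous_nonneg[OF assms(1)]
  show ?thesis
    using Wop_bounded_into_Hv0_iff[OF v assms(4,6,7)] Top_bounded_into_Bv0_iff[OF v assms(5)]
      Top_bounded_into_Hv0_std_weight_iff[OF assms(3,5), unfolded std_weight_def[of "\<beta> + 1"]]
    by blast
qed

end
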